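(* Let $d \ge 1$, $\mathcal{X}=\{0,1\}^d$, $p_+, p_- \in (0,1)$, and let $\phi$ be the randomization on $\mathcal{X}$ that, independently for each coordinate $i$, flips $x_i$ with probability $p_-$ if $x_i = 1$ and with probability $p_+$ if $x_i = 0$, i.e. $\Pr(\phi(x)_i \ne x_i) = p_-^{x_i} p_+^{1-x_i}$. Let $r_a, r_d \ge 0$ be integers, $x \in \mathcal{X}$, $\tilde{x} \in \mathcal{S}_{r_a,r_d}(x)$, $\mathcal{C} = \{i : x_i \ne \tilde{x}_i\}$, and for $q \ge 0$ let $\mathcal{R}_q^{r_a,r_d} = \{ z \in \mathcal{X} : \|x_{\mathcal{C}} - z_{\mathcal{C}}\|_0 = q,\ \|\mathbf{1}-x_{\mathcal{C}}\|_0 = r_a,\ \|x_{\mathcal{C}}\|_0 = r_d \}$. Then for every $q$ and every $z \in \mathcal{R}_q^{r_a,r_d}$, $$\eta_q^{r_a,r_d} := \frac{\Pr(\phi(x) = z)}{\Pr(\phi(\tilde{x}) = z)} = \left[\frac{p_+}{1-p_-}\right]^{q-r_d}\left[\frac{p_-}{1-p_+}\right]^{q-r_a},$$ which in particular is constant on $\mathcal{R}_q^{r_a,r_d}$. Moreover, for fixed $r_a, r_d$, $\eta_q^{r_a,r_d}$ is a monotonically decreasing function of $q$ if $p_- + p_+ < 1$, constant in $q$ if $p_- + p_+ = 1$, and monotonically increasing in $q$ if $p_- + p_+ > 1$.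
   Context: For $x \in \{0,1\}^d$, $\mathcal{S}_{r_a,r_d}(x)$ is the set of $\tilde{x} \in \{0,1\}^d$ with $\sum_i \mathbb{I}(\tilde{x}_i = x_i - 1) = r_d$ and $\sum_i \mathbb{I}(\tilde{x}_i = x_i + 1) = r_a$ (obtained from $x$ by deleting exactly $r_d$ ones and adding exactly $r_a$ ones). $x_{\mathcal{C}}$ is the restriction of $x$ to the coordinates in $\mathcal{C}$, $\|\cdot\|_0$ counts nonzero entries, $\mathbf{1}$ is the all-ones vector. *)

theory Defs
  imports "HOL-Probability.Probability"
begin

text \<open>Binary vectors in {0,1}^d are represented as functions nat => bool
  (True = 1) that are False outside {..<d}.\<close>

definition cube :: "nat \<Rightarrow> (nat \<Rightarrow> bool) set" where
  "cube d = {x. \<forall>i. d \<le> i \<longrightarrow> \<not> x i}"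

definition phi :: "nat \<Rightarrow> real \<Rightarrow> real \<Rightarrow> (nat \<Rightarrow> bool) \<Rightarrow> (nat \<Rightarrow> bool) pmf" where
  "phi d pp pm x = Pi_pmf {..<d} False
     (\<lambda>i. map_pmf (\<lambda>flip. if flip then \<not> x i else x i)
                   (bernoulli_pmf (if x i then pm else pp)))"

definition S_set :: "nat \<Rightarrow> nat \<Rightarrow> nat \<Rightarrow> (nat \<Rightarrow> bool) \<Rightarrow> (nat \<Rightarrow> bool) set" where
  "S_set d ra rd x = {xt \<in> cube d.
      card {i\<in>{..<d}. x i \<and> \<not> xt i} = rd \<and> card {i\<in>{..<d}. \<not> x i \<and> xt i} = ra}"

definition R_set :: "nat \<Rightarrow> nat set \<Rightarrow> (nat \<Rightarrow> bool) \<Rightarrow> nat \<Rightarrow> nat \<Rightarrow> nat \<Rightarrow> (nat \<Rightarrow> bool) set" where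
  "R_set d C x q ra rd = {z \<in> cube d.
      card {i\<in>C. x i \<noteq> z i} = q \<and> card {i\<in>C. \<not> x i} = ra \<and> card {i\<in>C. x i} = rd}"

definition eta :: "real \<Rightarrow> real \<Rightarrow> nat \<Rightarrow> nat \<Rightarrow> nat \<Rightarrow> real" where
  "eta pp pm ra rd q =
     (pp / (1 - pm)) powi (int q - int rd) * (pm / (1 - pp)) powi (int q - int ra)"

end

theory Submission
  imports Defs
begin

text \<open>Since the coordinates of \<open>phi\<close> are independent, the likelihood ratio of \<open>x\<close> and \<open>xt\<close> at \<open>z\<close>
  is a product of per-coordinate ratios, which are \<open>1\<close> off \<open>C\<close>. On \<open>C\<close>, with \<open>A = pp / (1 - pm)\<close> and
  \<open>B = pm / (1 - pp)\<close>, the ratio is \<open>1/A, B, A, 1/B\<close> for \<open>(x_i, z_i) = (1,1), (1,0), (0,1), (0,0)\<close>,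
  i.e. \<open>A\<close> to the power \<open>[x_i \<noteq> z_i] - [x_i]\<close> times \<open>B\<close> to the power \<open>[x_i \<noteq> z_i] - [\<not> x_i]\<close>.
  Summing the exponents over \<open>C\<close> gives \<open>q - rd\<close> and \<open>q - ra\<close>. Hence \<open>eta\<close> at \<open>q\<close> is \<open>(A B)^q\<close> times
  a positive constant, and \<open>A B - 1\<close> has the sign of \<open>pm + pp - 1\<close>.\<close>

definition coord_prob :: "real \<Rightarrow> real \<Rightarrow> bool \<Rightarrow> bool \<Rightarrow> real" where
  "coord_prob pp pm b c =
     (if b then (if c then 1 - pm else pm) else (if c then pp else 1 - pp))"

lemma pmf_flip_bernoulli:
  assumes "0 \<le> p" "p \<le> 1"
  shows "pmf (map_pmf (\<lambda>flip. if flip then \<not> b else b) (bernoulli_pmf p)) c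
         = (if c = b then 1 - p else p)"
proof -
  have "(\<lambda>flip. if flip then \<not> b else b) -` {c} = (if c = b then {False} else {True})"
    by auto
  then show ?thesis
    using assms by (simp add: pmf_map measure_pmf_single)
qed

lemma pmf_phi:
  assumes "0 \<le> pp" "pp \<le> 1" "0 \<le> pm" "pm \<le> 1" "z \<in> cube d"
  shows "pmf (phi d pp pm y) z = (\<Prod>i<d. coord_prob pp pm (y i) (z i))"
proof -
  have "\<forall>i. i \<notin> {..<d} \<longrightarrow> z i = False"
    using assms(5) by (auto simp: cube_def)
  then show ?thesis
    unfolding phi_def using assms
    by (simp add: pmf_Pi pmf_flip_bernoulli) (intro prod.cong refl; simp add: coord_prob_def)
qed

lemma coord_prob_pos:
  assumes "0 < pp" "pp < 1" "0 < pm" "pm < 1"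
  shows "coord_prob pp pm b c > 0"
  using assms by (simp add: coord_prob_def)

lemma coord_prob_ratio_flipped:
  assumes "0 < pp" "pp < 1" "0 < pm" "pm < 1"
  shows "coord_prob pp pm b c / coord_prob pp pm (\<not> b) c
         = (pp / (1 - pm)) powi (of_bool (b \<noteq> c) - of_bool b)
         * (pm / (1 - pp)) powi (of_bool (b \<noteq> c) - of_bool (\<not> b))"
  using assms by (cases b; cases c) (simp_all add: coord_prob_def power_int_minus)

lemma pmf_phi_ratio:
  assumes "0 < pp" "pp < 1" "0 < pm" "pm < 1" "z \<in> cube d"
  shows "pmf (phi d pp pm x) z / pmf (phi d pp pm xt) z
         = (\<Prod>i\<in>{i\<in>{..<d}. x i \<noteq> xt i}.
              coord_prob pp pm (x i) (z i) / coord_prob pp pm (\<not> x i) (z i))"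
proof -
  let ?r = "\<lambda>i. coord_prob pp pm (x i) (z i) / coord_prob pp pm (xt i) (z i)"
  have "?r i = 1" if "x i = xt i" for i
    using coord_prob_pos[OF assms(1-4), of "xt i" "z i"] that by simp
  then have "(\<Prod>i<d. ?r i) = (\<Prod>i\<in>{i\<in>{..<d}. x i \<noteq> xt i}. ?r i)"
    by (intro prod.mono_neutral_right) auto
  also have "\<dots> = (\<Prod>i\<in>{i\<in>{..<d}. x i \<noteq> xt i}.
                    coord_prob pp pm (x i) (z i) / coord_prob pp pm (\<not> x i) (z i))"
    by (intro prod.cong) auto
  finally show ?thesis
    using assms by (simp add: pmf_phi prod_dividef)
qed

lemma prod_power_int_sum:
  fixes a :: "'a :: field"
  assumes "finite A" "a \<noteq> 0"
  shows "(\<Prod>i\<in>A. a powi f i) = a powi (\<Sum>i\<in>A. f i)"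
  using assms by (induction A rule: finite_induct) (simp_all add: power_int_add)

lemma pmf_phi_ratio_eq_eta:
  assumes "0 < pp" "pp < 1" "0 < pm" "pm < 1"
    and "C = {i\<in>{..<d}. x i \<noteq> xt i}"
    and "z \<in> R_set d C x q ra rd"
  shows "pmf (phi d pp pm x) z / pmf (phi d pp pm xt) z = eta pp pm ra rd q"
proof -
  let ?A = "pp / (1 - pm)" and ?B = "pm / (1 - pp)"
  have "finite C"
    using assms(5) by simp
  have "?A \<noteq> 0" "?B \<noteq> 0"
    using assms(1-4) by simp_all
  have z: "z \<in> cube d" "card {i\<in>C. x i \<noteq> z i} = q"
      "card {i\<in>C. \<not> x i} = ra" "card {i\<in>C. x i} = rd"
    using assms(6) by (auto simp: R_set_def)
  have exponent_sum: "(\<Sum>i\<in>C. of_bool (x i \<noteq> z i) - of_bool (P i)) = int q - card {i\<in>C. P i}"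
    for P
    using \<open>finite C\<close> z(2) by (simp add: sum_subtractf Int_def conj_commute)
  have "pmf (phi d pp pm x) z / pmf (phi d pp pm xt) z
        = (\<Prod>i\<in>C. ?A powi (of_bool (x i \<noteq> z i) - of_bool (x i))
                 * ?B powi (of_bool (x i \<noteq> z i) - of_bool (\<not> x i)))"
    unfolding pmf_phi_ratio[OF assms(1-4) z(1)] assms(5)[symmetric]
    using assms(1-4) by (intro prod.cong) (simp_all add: coord_prob_ratio_flipped)
  also have "\<dots> = ?A powi (int q - int rd) * ?B powi (int q - int ra)"
    unfolding prod.distrib prod_power_int_sum[OF \<open>finite C\<close> \<open>?A \<noteq> 0\<close>]
      prod_power_int_sum[OF \<open>finite C\<close> \<open>?B \<noteq> 0\<close>] exponent_sum z(3,4) ..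
  finally show ?thesis
    by (simp add: eta_def)
qed

lemma eta_eq_power_mult_eta_0:
  assumes "pp \<noteq> 0" "pp \<noteq> 1" "pm \<noteq> 0" "pm \<noteq> 1"
  shows "eta pp pm ra rd q = (pp / (1 - pm) * (pm / (1 - pp))) ^ q * eta pp pm ra rd 0"
proof -
  define A B where "A = pp / (1 - pm)" and "B = pm / (1 - pp)"
  have "A \<noteq> 0" "B \<noteq> 0"
    using assms by (simp_all add: A_def B_def)
  then show ?thesis
    unfolding eta_def A_def[symmetric] B_def[symmetric]
    by (simp add: power_int_diff power_int_minus power_mult_distrib field_simps)
qed

lemma odds_product_minus_one:
  fixes pp pm :: real
  assumes "pp < 1" "pm < 1"
  shows "pp / (1 - pm) * (pm / (1 - pp)) - 1 = (pm + pp - 1) / ((1 - pm) * (1 - pp))"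
proof -
  have "1 - pm \<noteq> 0" "1 - pp \<noteq> 0"
    using assms by simp_all
  then show ?thesis
    by (simp add: divide_simps) (simp add: algebra_simps)
qed

theorem proposition3:
  fixes d ra rd :: nat and pp pm :: real and x xt :: "nat \<Rightarrow> bool"
  assumes "d \<ge> 1"
    and "0 < pp" "pp < 1" "0 < pm" "pm < 1"
    and "x \<in> cube d"
    and "xt \<in> S_set d ra rd x"
  defines "C \<equiv> {i\<in>{..<d}. x i \<noteq> xt i}"
  shows "(\<forall>q z. z \<in> R_set d C x q ra rd \<longrightarrow>
            pmf (phi d pp pm x) z / pmf (phi d pp pm xt) z = eta pp pm ra rd q)
       \<and> (pm + pp < 1 \<longrightarrow> antimono (eta pp pm ra rd))
       \<and> (pm + pp = 1 \<longrightarrow> (\<forall>q. eta pp pm ra rd q = eta pp pm ra rd 0))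
       \<and> (pm + pp > 1 \<longrightarrow> mono (eta pp pm ra rd))"
proof (intro conjI allI impI)
  define c K where "c = pp / (1 - pm) * (pm / (1 - pp))" and "K = eta pp pm ra rd 0"
  have eta_q: "eta pp pm ra rd q = c ^ q * K" for q
    unfolding c_def K_def using assms(2-5) by (intro eta_eq_power_mult_eta_0) simp_all
  have "c \<ge> 0" "K > 0"
    unfolding c_def K_def eta_def using assms(2-5) by simp_all
  have sign: "c - 1 = (pm + pp - 1) / ((1 - pm) * (1 - pp))" "(1 - pm) * (1 - pp) > 0"
    unfolding c_def using odds_product_minus_one[OF assms(3,5)] assms(3,5) by simp_all
  show "pmf (phi d pp pm x) z / pmf (phi d pp pm xt) z = eta pp pm ra rd q"
    if "z \<in> R_set d C x q ra rd" for q z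
    using pmf_phi_ratio_eq_eta[OF assms(2-5) meta_eq_to_obj_eq[OF C_def] that] .
  show "antimono (eta pp pm ra rd)" if "pm + pp < 1"
  proof (rule antimonoI)
    have "c - 1 < 0"
      unfolding sign(1) using that sign(2) by (intro divide_neg_pos) simp_all
    then show "eta pp pm ra rd n \<le> eta pp pm ra rd m" if "m \<le> n" for m n
      unfolding eta_q using \<open>c \<ge> 0\<close> \<open>K > 0\<close> that
      by (intro mult_right_mono power_decreasing) simp_all
  qed
  show "eta pp pm ra rd q = eta pp pm ra rd 0" if "pm + pp = 1" for q
    using sign that by (simp add: eta_q)
  show "mono (eta pp pm ra rd)" if "pm + pp > 1"
  proof (rule monoI)
    have "c - 1 > 0"
      unfolding sign(1) using that sign(2) by (intro divide_pos_pos) simp_all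
    then show "eta pp pm ra rd m \<le> eta pp pm ra rd n" if "m \<le> n" for m n
      unfolding eta_q using \<open>K > 0\<close> that
      by (intro mult_right_mono power_increasing) simp_all
  qed
qed

end
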